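(* In the transactional panorama model with the lenses and metrics described in the context, each $k$-relaxed variant has no greater staleness and no smaller invisibility than its corresponding base lens: $S(k\text{-GCNB})\le S(\mathrm{GCNB})$, $I(k\text{-GCNB})\ge I(\mathrm{GCNB})$, $S(k\text{-LCNB})\le S(\mathrm{LCNB})$, $I(k\text{-LCNB})\ge I(\mathrm{LCNB})$, $S(k\text{-LCMB})\le S(\mathrm{LCMB})$, and $I(k\text{-LCMB})\ge I(\mathrm{LCMB})$, for any $k\ge 0$.
   Context: A view graph is a DAG on a set $N$ of nodes (source data and views). Write transactions are processed one at a time; write transaction $w^{t_i}$ creates version $G^{t_i}$ with state set $V^{t_i}$ containing, for each node $n_k$, either its computed new result $v_k^{t_i}$, a placeholder $UC_k^{t_i}$ if $w^{t_i}$ updates $n_k$ but has not yet computed it, or its result from the previous version if $n_k$ is not updated. A version is committed once all its new results are computed; at any time there is the committed graph (most recently committed version, no UCs) and the latest graph (version of the most recent write transaction). Read transactions $r^{s_1},\dots,r^{s_m}$ each read the views in the current viewport and return immediately a set $H^{s_i}$ of states (results or UCs); $Time(r^{s_i})$ is its return time. A returned state's timestamp is that of its version. Lenses: GCNB returns the viewport states from the committed graph. LCNB returns them from the more recent of the committed and latest graphs that has zero UCs for the viewport. LCMB: if reading either the committed or the latest graph preserves monotonicity (no view gets a state with smaller timestamp than previously read), behave like LCNB; otherwise read the latest graph. $k$-GCNB reads the latest graph if it has at most $k$ UCs in total, otherwise the committed graph. $k$-LCNB reads the more recent of the committed and latest graphs having at most $k$ UCs for the viewport. $k$-LCMB: if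 reading either graph preserves monotonicity, behave like $k$-LCNB; otherwise read the latest graph. Metrics for $R=\{r^{s_1},\dots,r^{s_m}\}$: invisibility $I(R)=\sum_{i=1}^{m-1}|H^{s_i}_{UC}|\,(Time(r^{s_{i+1}})-Time(r^{s_i}))$ where $H^{s_i}_{UC}$ is the set of UCs in $H^{s_i}$; staleness $S(R)=\sum_{i=1}^{m-1}\sum_{v_k^{t_j}\in H^{s_i}_{qr}}\mathbf{1}[v_k^{t_j}\notin V^{t_i}]\,(Time(r^{s_{i+1}})-Time(r^{s_i}))$ where $H^{s_i}_{qr}$ is the set of view results in $H^{s_i}$ and $G^{t_i}$ is the latest version before $r^{s_i}$ starts. $S(A)$, $I(A)$ denote these metrics under lens $A$; lenses are compared on the same write transactions, the same order of computing new view results, and the same sequence of read transactions. *)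

theory Defs
  imports Complex_Main
begin

text \<open>Versions are indexed by natural numbers:
  version 0 is the initial graph, write transaction j (for j in {1..W}) creates version j.
  A state is either a computed result  Res k j  (the result of node k computed for version j)
  or a placeholder  UC k j  (node k updated by write j but not yet computed).\<close>

datatype 'n state = Res 'n nat | UC 'n nat

fun ts :: "'n state \<Rightarrow> nat" where
  "ts (Res k j) = j" | "ts (UC k j) = j"

fun is_UC :: "'n state \<Rightarrow> bool" where
  "is_UC (Res k j) = False" | "is_UC (UC k j) = True"

fun is_Res :: "'n state \<Rightarrow> bool" where
  "is_Res (Res k j) = True" | "is_Res (UC k j) = False"

text \<open>An execution: view graph, write transactions (arrival times, updated node sets,
  times at which each new result is computed) and a sequence of read transactions
  (return times and viewports).\<close>

record 'n panorama =
  nodes    :: "'n set"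
  edges    :: "('n \<times> 'n) set"
  views    :: "'n set"
  nwrites  :: nat
  upd      :: "nat \<Rightarrow> 'n set"
  wtime    :: "nat \<Rightarrow> real"
  ctime    :: "nat \<Rightarrow> 'n \<Rightarrow> real"
  nreads   :: nat
  rtime    :: "nat \<Rightarrow> real"
  viewport :: "nat \<Rightarrow> 'n set"

definition wf_panorama :: "'n panorama \<Rightarrow> bool" where
  "wf_panorama P \<longleftrightarrow>
     finite (nodes P) \<and> edges P \<subseteq> nodes P \<times> nodes P \<and> acyclic (edges P) \<and>
     views P \<subseteq> nodes P \<and>
     (\<forall>j\<in>{1..nwrites P}. upd P j \<subseteq> nodes P) \<and>
     strict_mono_on {1..nwrites P} (wtime P) \<and>
     (\<forall>j\<in>{1..nwrites P}. \<forall>k\<in>upd P j. wtime P j \<le> ctime P j k) \<and>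
     (\<forall>i<nreads P. viewport P i \<subseteq> views P) \<and>
     (\<forall>i. Suc i < nreads P \<longrightarrow> rtime P i \<le> rtime P (Suc i))"

definition latest :: "'n panorama \<Rightarrow> real \<Rightarrow> nat" where
  "latest P tau = Max ({0} \<union> {j \<in> {1..nwrites P}. wtime P j \<le> tau})"

definition version_done :: "'n panorama \<Rightarrow> real \<Rightarrow> nat \<Rightarrow> bool" where
  "version_done P tau j \<longleftrightarrow> (\<forall>k\<in>upd P j. ctime P j k \<le> tau)"

text \<open>Committed version at time tau: the most recent version j (already created) such that
  all new results of versions 1..j have been computed (versions commit in order).\<close>
definition committed :: "'n panorama \<Rightarrow> real \<Rightarrow> nat" where
  "committed P tau = Max ({0} \<union> {j \<in> {1..nwrites P}. wtime P j \<le> tau \<and>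
                                    (\<forall>i\<in>{1..j}. version_done P tau i)})"

definition lastupd :: "'n panorama \<Rightarrow> nat \<Rightarrow> 'n \<Rightarrow> nat" where
  "lastupd P j k = Max ({0} \<union> {i \<in> {1..j}. k \<in> upd P i})"

definition state :: "'n panorama \<Rightarrow> real \<Rightarrow> nat \<Rightarrow> 'n \<Rightarrow> 'n state" where
  "state P tau j k = (let i = lastupd P j k in
      if i = 0 then Res k 0 else if ctime P i k \<le> tau then Res k i else UC k i)"

definition stateset :: "'n panorama \<Rightarrow> real \<Rightarrow> nat \<Rightarrow> 'n state set" where
  "stateset P tau j = (\<lambda>k. state P tau j k) ` nodes P"

definition nUC :: "'n panorama \<Rightarrow> real \<Rightarrow> nat \<Rightarrow> 'n set \<Rightarrow> nat" where
  "nUC P tau j A = card {k \<in> A. is_UC (state P tau j k)}"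

datatype lens = GCNB | LCNB | LCMB | kGCNB nat | kLCNB nat | kLCMB nat

text \<open>The more recent of the committed and the latest graph satisfying a condition
  (the committed graph is the fallback; it never contains UCs).\<close>
definition more_recent :: "'n panorama \<Rightarrow> real \<Rightarrow> (nat \<Rightarrow> bool) \<Rightarrow> nat" where
  "more_recent P tau c = (if c (latest P tau) then latest P tau else committed P tau)"

text \<open>Monotonicity: reading version g gives no viewport node a state with smaller
  timestamp than the largest one previously read for it (pm).\<close>
definition preserves_mono ::
  "'n panorama \<Rightarrow> real \<Rightarrow> 'n set \<Rightarrow> ('n \<Rightarrow> nat) \<Rightarrow> nat \<Rightarrow> bool" where
  "preserves_mono P tau A pm g \<longleftrightarrow> (\<forall>k\<in>A. pm k \<le> ts (state P tau g k))"

fun lens_choice :: "'n panorama \<Rightarrow> lens \<Rightarrow> real \<Rightarrow> 'n set \<Rightarrow> ('n \<Rightarrow> nat) \<Rightarrow> nat" where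
  "lens_choice P GCNB tau A pm = committed P tau"
| "lens_choice P LCNB tau A pm = more_recent P tau (\<lambda>g. nUC P tau g A = 0)"
| "lens_choice P LCMB tau A pm =
     (if preserves_mono P tau A pm (committed P tau) \<and> preserves_mono P tau A pm (latest P tau)
      then more_recent P tau (\<lambda>g. nUC P tau g A = 0) else latest P tau)"
| "lens_choice P (kGCNB k) tau A pm =
     (if nUC P tau (latest P tau) (nodes P) \<le> k then latest P tau else committed P tau)"
| "lens_choice P (kLCNB k) tau A pm = more_recent P tau (\<lambda>g. nUC P tau g A \<le> k)"
| "lens_choice P (kLCMB k) tau A pm =
     (if preserves_mono P tau A pm (committed P tau) \<and> preserves_mono P tau A pm (latest P tau)
      then more_recent P tau (\<lambda>g. nUC P tau g A \<le> k) else latest P tau)"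

primrec prevmax :: "'n panorama \<Rightarrow> lens \<Rightarrow> nat \<Rightarrow> 'n \<Rightarrow> nat" where
  "prevmax P L 0 = (\<lambda>k. 0)"
| "prevmax P L (Suc i) =
     (let g = lens_choice P L (rtime P i) (viewport P i) (prevmax P L i) in
      (\<lambda>k. if k \<in> viewport P i then max (prevmax P L i k) (ts (state P (rtime P i) g k))
           else prevmax P L i k))"

definition readver :: "'n panorama \<Rightarrow> lens \<Rightarrow> nat \<Rightarrow> nat" where
  "readver P L i = lens_choice P L (rtime P i) (viewport P i) (prevmax P L i)"

definition H :: "'n panorama \<Rightarrow> lens \<Rightarrow> nat \<Rightarrow> 'n state set" where
  "H P L i = (\<lambda>k. state P (rtime P i) (readver P L i) k) ` viewport P i"

definition invisibility :: "'n panorama \<Rightarrow> lens \<Rightarrow> real" where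
  "invisibility P L = (\<Sum>i<nreads P - 1.
      real (card {h \<in> H P L i. is_UC h}) * (rtime P (Suc i) - rtime P i))"

definition staleness :: "'n panorama \<Rightarrow> lens \<Rightarrow> real" where
  "staleness P L = (\<Sum>i<nreads P - 1.
      real (card {h \<in> H P L i. is_Res h \<and>
                   h \<notin> stateset P (rtime P i) (latest P (rtime P i))})
      * (rtime P (Suc i) - rtime P i))"

end

theory Submission
  imports Defs
begin

text \<open>A relaxed lens reads either the latest graph, whose results are never stale, or the same
  graph as its base lens; a base lens reads either the latest graph or the committed graph,
  which contains no UCs. So at every read the relaxed lens returns at most as many stale results
  and at least as many UCs as its base lens, and the inequalities follow by summing over reads.
  For the monotonic lenses the relaxed lens always reads a version at least as recent as the base
  lens, so its history of read timestamps dominates the base lens's history; the monotonicity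
  test is then harder to pass, and failing it sends the relaxed lens to the latest graph.\<close>

fun relax :: "nat \<Rightarrow> lens \<Rightarrow> lens" where
  "relax k GCNB = kGCNB k"
| "relax k LCNB = kLCNB k"
| "relax k LCMB = kLCMB k"
| "relax k L = L"

lemma ts_state: "ts (state P tau g k) = lastupd P g k"
  unfolding state_def Let_def by auto

lemma lastupd_mono: "g \<le> g' \<Longrightarrow> lastupd P g k \<le> lastupd P g' k"
  unfolding lastupd_def by (rule Max_mono) auto

lemma committed_le_latest: "committed P tau \<le> latest P tau"
  unfolding committed_def latest_def by (rule Max_mono) auto

lemma not_is_UC_state_committed: "\<not> is_UC (state P tau (committed P tau) k)"
proof -
  define c where "c = committed P tau"
  define i where "i = lastupd P c k"
  have "c \<in> {0} \<union> {j \<in> {1..nwrites P}. wtime P j \<le> tau \<and> (\<forall>i\<in>{1..j}. version_done P tau i)}"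
    unfolding c_def committed_def by (rule Max_in) auto
  then have c_cases: "c = 0 \<or> (\<forall>j\<in>{1..c}. version_done P tau j)" by auto
  have "i \<in> {0} \<union> {i \<in> {1..c}. k \<in> upd P i}"
    unfolding i_def lastupd_def by (rule Max_in) auto
  then have "i = 0 \<or> (i \<in> {1..c} \<and> k \<in> upd P i)" by auto
  then have "i = 0 \<or> ctime P i k \<le> tau"
    using c_cases unfolding version_done_def by fastforce
  then show ?thesis
    unfolding state_def Let_def i_def[symmetric] c_def[symmetric] by auto
qed

lemma readver_latest_or_committed:
  "readver P L i = latest P (rtime P i) \<or> readver P L i = committed P (rtime P i)"
  unfolding readver_def by (cases L) (auto simp: more_recent_def)

lemma lens_choice_kLCMB_latest_or_LCMB:
  assumes "\<And>k. pm k \<le> pm' k"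
  shows "lens_choice P LCMB tau A pm \<le> lens_choice P (kLCMB n) tau A pm'"
    and "lens_choice P (kLCMB n) tau A pm' = latest P tau \<or>
         lens_choice P (kLCMB n) tau A pm' = lens_choice P LCMB tau A pm"
proof -
  have mono_history: "preserves_mono P tau A pm' g \<Longrightarrow> preserves_mono P tau A pm g" for g
    using assms unfolding preserves_mono_def by (meson le_trans)
  show "lens_choice P LCMB tau A pm \<le> lens_choice P (kLCMB n) tau A pm'"
    using committed_le_latest mono_history by (auto simp: more_recent_def)
  show "lens_choice P (kLCMB n) tau A pm' = latest P tau \<or>
        lens_choice P (kLCMB n) tau A pm' = lens_choice P LCMB tau A pm"
    using mono_history by (auto simp: more_recent_def)
qed

lemma prevmax_LCMB_le_kLCMB: "prevmax P LCMB i k \<le> prevmax P (kLCMB n) i k"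
proof (induction i arbitrary: k)
  case 0
  then show ?case by simp
next
  case (Suc i)
  let ?t = "rtime P i" and ?A = "viewport P i"
  have "lens_choice P LCMB ?t ?A (prevmax P LCMB i)
      \<le> lens_choice P (kLCMB n) ?t ?A (prevmax P (kLCMB n) i)"
    by (rule lens_choice_kLCMB_latest_or_LCMB(1)) (rule Suc.IH)
  then have "ts (state P ?t (lens_choice P LCMB ?t ?A (prevmax P LCMB i)) k)
      \<le> ts (state P ?t (lens_choice P (kLCMB n) ?t ?A (prevmax P (kLCMB n) i)) k)"
    by (simp add: ts_state lastupd_mono)
  then show ?case
    using Suc.IH[of k] by (auto simp: Let_def)
qed

lemma readver_relax:
  "readver P (relax n L) i = latest P (rtime P i) \<or> readver P (relax n L) i = readver P L i"
proof (cases L)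
  case LCMB
  show ?thesis
    unfolding readver_def LCMB relax.simps
    by (rule lens_choice_kLCMB_latest_or_LCMB(2)[OF prevmax_LCMB_le_kLCMB])
qed (auto simp: readver_def more_recent_def)

lemma stale_results_latest:
  assumes "readver P L i = latest P (rtime P i)" and "viewport P i \<subseteq> nodes P"
  shows "{h \<in> H P L i. is_Res h \<and> h \<notin> stateset P (rtime P i) (latest P (rtime P i))} = {}"
  using assms unfolding H_def stateset_def by auto

lemma UCs_committed:
  assumes "readver P L i = committed P (rtime P i)"
  shows "{h \<in> H P L i. is_UC h} = {}"
  using assms not_is_UC_state_committed[of P "rtime P i"] unfolding H_def by auto

lemma card_stale_UC_relax:
  assumes "viewport P i \<subseteq> nodes P"
  defines "stale L \<equiv> card {h \<in> H P L i. is_Res h \<and>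
                          h \<notin> stateset P (rtime P i) (latest P (rtime P i))}"
    and "ucs L \<equiv> card {h \<in> H P L i. is_UC h}"
  shows "stale (relax n L) \<le> stale L \<and> ucs L \<le> ucs (relax n L)"
proof (cases "readver P (relax n L) i = readver P L i")
  case True
  then show ?thesis unfolding stale_def ucs_def H_def by simp
next
  case False
  then have relax_latest: "readver P (relax n L) i = latest P (rtime P i)"
    using readver_relax by metis
  with False have "readver P L i = committed P (rtime P i)"
    using readver_latest_or_committed by metis
  then have "ucs L = 0"
    unfolding ucs_def using UCs_committed by (metis card.empty)
  moreover have "stale (relax n L) = 0"
    unfolding stale_def using stale_results_latest[OF relax_latest assms(1)] by (metis card.empty)
  ultimately show ?thesis by simp
qed

lemma staleness_invisibility_relax:
  assumes "wf_panorama P"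
  shows "staleness P (relax n L) \<le> staleness P L \<and> invisibility P L \<le> invisibility P (relax n L)"
proof -
  have gap: "0 \<le> rtime P (Suc i) - rtime P i" if "i < nreads P - 1" for i
    using assms that unfolding wf_panorama_def by auto
  have vp: "viewport P i \<subseteq> nodes P" if "i < nreads P - 1" for i
  proof -
    from that have "i < nreads P" by simp
    with assms show ?thesis unfolding wf_panorama_def by blast
  qed
  have "staleness P (relax n L) \<le> staleness P L"
    unfolding staleness_def
    by (rule sum_mono, rule mult_right_mono) (use card_stale_UC_relax[OF vp] gap in auto)
  moreover have "invisibility P L \<le> invisibility P (relax n L)"
    unfolding invisibility_def
    by (rule sum_mono, rule mult_right_mono) (use card_stale_UC_relax[OF vp] gap in auto)
  ultimately show ?thesis ..
qed

theorem theorem2p11: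
  fixes P :: "'n panorama" and k :: nat
  assumes "wf_panorama P"
  shows "staleness P (kGCNB k) \<le> staleness P GCNB \<and> invisibility P (kGCNB k) \<ge> invisibility P GCNB \<and>
         staleness P (kLCNB k) \<le> staleness P LCNB \<and> invisibility P (kLCNB k) \<ge> invisibility P LCNB \<and>
         staleness P (kLCMB k) \<le> staleness P LCMB \<and> invisibility P (kLCMB k) \<ge> invisibility P LCMB"
  using staleness_invisibility_relax[OF assms, of k GCNB]
    staleness_invisibility_relax[OF assms, of k LCNB]
    staleness_invisibility_relax[OF assms, of k LCMB]
  by simp

end
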